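(* Let $R_0>0$, $r>0$, $V_T>0$ and $V_s>0$. Suppose evaders may initially be located anywhere in the closed disk of radius $R_0$, each evader moves with speed at most $V_T$ in any direction, and a single sweeper (or a line formation of sweepers) carries a line-segment sensor of total length $2r$ that moves with velocity $V_s$. If $$V_s<V_{LB}:=\frac{\pi R_0 V_T}{r},$$ then no sweeping process can successfully complete the confinement task.
   Context: An evader is detected as soon as its position lies on the sensor segment. At time $t$ the evader region is the set of all points at which an undetected evader could be at time $t$, that is, the endpoints at time $t$ of all paths of speed at most $V_T$ that start in the initial disk and do not meet the sensor before time $t$. The sensor moving "with velocity $V_s$" means that its area-sweeping rate is at most the rate $2rV_s$ attained when the whole segment moves perpendicular to itself at speed $V_s$. The confinement task means preventing the evader region from expanding beyond its initial size, i.e. the sweeping must keep the area of the evader region from growing above the initial area $\pi R_0^2$. *)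

theory Defs
  imports "HOL-Analysis.Analysis"
begin

type_synonym point = "real^2"

definition outer_area_le :: "point set \<Rightarrow> real \<Rightarrow> bool" where
  "outer_area_le A c \<longleftrightarrow> (\<exists>S \<in> sets lebesgue. A \<subseteq> S \<and> emeasure lebesgue S \<le> ennreal c)"

definition sensor :: "(real \<Rightarrow> point) \<Rightarrow> (real \<Rightarrow> point) \<Rightarrow> real \<Rightarrow> point set" where
  "sensor a b t = closed_segment (a t) (b t)"

text \<open>Admissible sweeping process: continuous motion of a segment of length 2r whose
  area-sweeping rate is at most 2 r Vs, i.e. the area swept during any time interval
  [t1,t2] is at most 2 r Vs (t2 - t1).\<close>
definition admissible_sweeper ::
  "real \<Rightarrow> real \<Rightarrow> (real \<Rightarrow> point) \<Rightarrow> (real \<Rightarrow> point) \<Rightarrow> bool" where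
  "admissible_sweeper r Vs a b \<longleftrightarrow>
     continuous_on {0..} a \<and> continuous_on {0..} b \<and>
     (\<forall>t\<ge>0. dist (a t) (b t) = 2 * r) \<and>
     (\<forall>t1 t2. 0 \<le> t1 \<longrightarrow> t1 \<le> t2 \<longrightarrow>
        outer_area_le (\<Union>s\<in>{t1..t2}. sensor a b s) (2 * r * Vs * (t2 - t1)))"

definition evader_region ::
  "point \<Rightarrow> real \<Rightarrow> real \<Rightarrow> (real \<Rightarrow> point) \<Rightarrow> (real \<Rightarrow> point) \<Rightarrow> real \<Rightarrow> point set" where
  "evader_region x0 R0 VT a b t =
     {p t | p. p 0 \<in> cball x0 R0 \<and>
        (\<forall>s1\<in>{0..t}. \<forall>s2\<in>{0..t}. dist (p s1) (p s2) \<le> VT * \<bar>s1 - s2\<bar>) \<and>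
        (\<forall>s\<in>{0..t}. p s \<notin> sensor a b s)}"

definition confines ::
  "point \<Rightarrow> real \<Rightarrow> real \<Rightarrow> (real \<Rightarrow> point) \<Rightarrow> (real \<Rightarrow> point) \<Rightarrow> bool" where
  "confines x0 R0 VT a b \<longleftrightarrow>
     (\<forall>t\<ge>0. outer_area_le (evader_region x0 R0 VT a b t) (pi * R0^2))"

end

theory Submission
  imports Defs "HOL-Computational_Algebra.Polynomial"
begin

text \<open>
  Suppose the sweeper confines the evaders. The initial sensor meets the circle of radius
  \<open>R0\<close> in at most two points, so by continuity, for a short time \<open>t\<close>, an evader leaving the
  disk radially at full speed is caught only if its direction lies in a thin cone around
  these points. Hence every point of the disk of radius \<open>R0 + VT t\<close> is in the evader region,
  swept during \<open>[0, t]\<close>, or in the thin cone, and comparing areas gives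
  \<open>\<pi> (R0 + VT t)\<^sup>2 \<le> \<pi> R0\<^sup>2 + 2 r Vs t + ((R0 + VT t)\<^sup>2 - R0\<^sup>2) m\<close>, where \<open>m\<close>, the area of the
  cone inside the unit disk, is as small as we like. This forces \<open>(\<pi> - m) R0 VT \<le> r Vs\<close>,
  contradicting \<open>Vs < \<pi> R0 VT / r\<close> once \<open>m\<close> is small enough.
\<close>

lemma finite_sphere_Int_closed_segment:
  fixes x0 p q :: "'a::real_inner"
  assumes "p \<noteq> q"
  shows "finite (sphere x0 R \<inter> closed_segment p q)"
proof -
  define w d where "w = p - x0" and "d = q - p"
  define P where "P = [:w \<bullet> w - R\<^sup>2, 2 * (w \<bullet> d), d \<bullet> d:]"
  have "P \<noteq> 0" using assms by (simp add: P_def d_def)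
  have "sphere x0 R \<inter> closed_segment p q \<subseteq> (\<lambda>u. p + u *\<^sub>R d) ` {u. poly P u = 0}"
  proof
    fix z assume z: "z \<in> sphere x0 R \<inter> closed_segment p q"
    then obtain u where u: "z = p + u *\<^sub>R d"
      unfolding closed_segment_def d_def by (auto simp: algebra_simps)
    have "(w + u *\<^sub>R d) \<bullet> (w + u *\<^sub>R d) = R\<^sup>2"
      using z by (simp add: u w_def dist_norm norm_minus_commute power2_norm_eq_inner[symmetric]
          algebra_simps)
    then have "poly P u = 0"
      by (simp add: P_def inner_add inner_commute power2_eq_square algebra_simps)
    then show "z \<in> (\<lambda>u. p + u *\<^sub>R d) ` {u. poly P u = 0}" using u by blast
  qed
  then show ?thesis using poly_roots_finite[OF \<open>P \<noteq> 0\<close>] finite_subset by blast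
qed

lemma closed_segment_approx:
  fixes p q p0 q0 :: "'a::real_normed_vector"
  assumes "y \<in> closed_segment p q" "dist p p0 < e" "dist q q0 < e"
  shows "\<exists>y0\<in>closed_segment p0 q0. dist y y0 < e"
proof -
  obtain u where u: "y = (1 - u) *\<^sub>R p + u *\<^sub>R q" "0 \<le> u" "u \<le> 1"
    using assms(1) unfolding closed_segment_def by auto
  define y0 where "y0 = (1 - u) *\<^sub>R p0 + u *\<^sub>R q0"
  have "y0 \<in> closed_segment p0 q0" unfolding y0_def closed_segment_def using u by auto
  moreover have "dist y y0 < e"
  proof -
    have "dist y y0 = norm ((1 - u) *\<^sub>R (p - p0) + u *\<^sub>R (q - q0))"
      by (simp add: u y0_def dist_norm algebra_simps)
    also have "\<dots> \<le> (1 - u) * dist p p0 + u * dist q q0"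
      using u norm_triangle_ineq[of "(1 - u) *\<^sub>R (p - p0)" "u *\<^sub>R (q - q0)"]
      by (simp add: dist_norm)
    also have "\<dots> < (1 - u) * e + u * e"
      using u assms(2,3)
      by (cases "u = 0") (auto intro!: add_le_less_mono mult_left_mono mult_strict_left_mono)
    finally show ?thesis by (simp add: algebra_simps)
  qed
  ultimately show ?thesis by blast
qed

lemma compact_closed_approx_Int:
  fixes K S :: "'a::heine_borel set"
  assumes "compact K" "closed S" "\<delta> > 0"
  shows "\<exists>\<eta>>0. \<forall>z\<in>K. \<forall>y\<in>S. dist z y < \<eta> \<longrightarrow> (\<exists>e\<in>K \<inter> S. dist z e < \<delta>)"
proof -
  define K' where "K' = K - (\<Union>e\<in>K \<inter> S. ball e \<delta>)"
  have "compact K'" unfolding K'_def using assms(1) by (intro compact_diff) auto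
  moreover have "K' \<inter> S = {}" unfolding K'_def using assms(3) by fastforce
  ultimately obtain \<eta> where "\<eta> > 0" "\<forall>z\<in>K'. \<forall>y\<in>S. \<eta> \<le> dist z y"
    using separate_compact_closed[OF _ assms(2)] by blast
  then show ?thesis unfolding K'_def by (force simp: dist_commute)
qed

definition ray_cone :: "'a::real_normed_vector \<Rightarrow> 'a set \<Rightarrow> 'a set" where
  "ray_cone x0 U = {y. y \<noteq> x0 \<and> sgn (y - x0) \<in> U}"

lemma open_ray_cone:
  assumes "open U"
  shows "open (ray_cone x0 U)"
proof -
  have "continuous_on (- {x0}) (\<lambda>y. sgn (y - x0))"
    by (intro continuous_intros) auto
  then have "open ((\<lambda>y. sgn (y - x0)) -` U \<inter> - {x0})"
    using assms continuous_on_open_vimage[of "- {x0}"] by blast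
  moreover have "ray_cone x0 U = (\<lambda>y. sgn (y - x0)) -` U \<inter> - {x0}"
    unfolding ray_cone_def by auto
  ultimately show ?thesis by simp
qed

lemma ray_cone_homothety_iff:
  assumes "c > 0"
  shows "x0 + c *\<^sub>R (y - x0) \<in> ray_cone x0 U \<longleftrightarrow> y \<in> ray_cone x0 U"
  using assms by (simp add: ray_cone_def sgn_scaleR)

lemma measure_ray_cone_Int_cball:
  fixes x0 :: "'a::euclidean_space"
  assumes "R > 0"
  shows "measure lebesgue (ray_cone x0 U \<inter> cball x0 R)
           = R ^ DIM('a) * measure lebesgue (ray_cone x0 U \<inter> cball x0 1)"
proof -
  have "ray_cone x0 U \<inter> cball x0 R
          = (\<lambda>y. R *\<^sub>R y + (x0 - R *\<^sub>R x0)) ` (ray_cone x0 U \<inter> cball x0 1)"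
  proof (intro equalityI subsetI)
    fix z assume z: "z \<in> ray_cone x0 U \<inter> cball x0 R"
    define y where "y = x0 + (1 / R) *\<^sub>R (z - x0)"
    have "y \<in> ray_cone x0 U"
      using z assms ray_cone_homothety_iff[of "1 / R" x0 z U] by (simp add: y_def)
    moreover have "y \<in> cball x0 1"
      using z assms by (simp add: y_def dist_norm norm_minus_commute divide_le_eq)
    moreover have "z = R *\<^sub>R y + (x0 - R *\<^sub>R x0)"
      using assms by (simp add: y_def algebra_simps)
    ultimately show "z \<in> (\<lambda>y. R *\<^sub>R y + (x0 - R *\<^sub>R x0)) ` (ray_cone x0 U \<inter> cball x0 1)"
      by blast
  next
    fix z assume "z \<in> (\<lambda>y. R *\<^sub>R y + (x0 - R *\<^sub>R x0)) ` (ray_cone x0 U \<inter> cball x0 1)"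
    then obtain y where y: "y \<in> ray_cone x0 U" "dist x0 y \<le> 1" and z: "z = x0 + R *\<^sub>R (y - x0)"
      by (auto simp: algebra_simps)
    have "z \<in> ray_cone x0 U" unfolding z by (rule ray_cone_homothety_iff[OF assms, THEN iffD2, OF y(1)])
    moreover have "dist x0 z \<le> R"
      using y(2) assms by (simp add: z dist_norm norm_minus_commute mult_left_le)
    ultimately show "z \<in> ray_cone x0 U \<inter> cball x0 R" by simp
  qed
  then show ?thesis using measure_lebesgue_affine[of R] assms by simp
qed

lemma measure_ray_cone_annulus:
  fixes x0 :: "'a::euclidean_space"
  assumes "ray_cone x0 U \<in> sets lebesgue" "0 < R0" "R0 \<le> R1"
  shows "measure lebesgue (ray_cone x0 U \<inter> cball x0 R1 - cball x0 R0)
           = (R1 ^ DIM('a) - R0 ^ DIM('a)) * measure lebesgue (ray_cone x0 U \<inter> cball x0 1)"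
proof -
  have fin: "ray_cone x0 U \<inter> cball x0 R \<in> fmeasurable lebesgue" for R
    using assms(1) by (intro fmeasurableI2[OF lmeasurable_cball[of x0 R]] sets.Int) auto
  have "measure lebesgue (ray_cone x0 U \<inter> cball x0 R1 - cball x0 R0)
      = measure lebesgue (ray_cone x0 U \<inter> cball x0 R1 - ray_cone x0 U \<inter> cball x0 R0)"
    by (rule arg_cong[of _ _ "measure lebesgue"]) auto
  also have "\<dots> = measure lebesgue (ray_cone x0 U \<inter> cball x0 R1)
                   - measure lebesgue (ray_cone x0 U \<inter> cball x0 R0)"
    using fin[of R1] fin[of R0] assms(3) by (intro measurable_measure_Diff) auto
  also have "\<dots> = (R1 ^ DIM('a) - R0 ^ DIM('a)) * measure lebesgue (ray_cone x0 U \<inter> cball x0 1)"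
    using measure_ray_cone_Int_cball[of R1 x0 U] measure_ray_cone_Int_cball[of R0 x0 U] assms(2,3)
    by (simp add: left_diff_distrib)
  finally show ?thesis .
qed

lemma negligible_ray_cone_finite:
  fixes x0 :: "'a::euclidean_space"
  assumes "finite D" "DIM('a) \<ge> 2"
  shows "negligible (ray_cone x0 D)"
proof -
  have "ray_cone x0 D \<subseteq> (\<Union>d\<in>D. (+) x0 ` span {d})"
  proof
    fix y assume "y \<in> ray_cone x0 D"
    then have "sgn (y - x0) \<in> D" by (simp add: ray_cone_def)
    moreover have "y - x0 = norm (y - x0) *\<^sub>R sgn (y - x0)"
      using \<open>y \<in> ray_cone x0 D\<close> by (simp add: ray_cone_def sgn_div_norm)
    then have "y - x0 \<in> span {sgn (y - x0)}"
      by (metis span_base span_mul singletonI)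
    ultimately show "y \<in> (\<Union>d\<in>D. (+) x0 ` span {d})"
      by (intro UN_I[of "sgn (y - x0)"] image_eqI[of y _ "y - x0"]) auto
  qed
  moreover have "negligible ((+) x0 ` span {d})" for d :: 'a
    using assms(2) by (intro negligible_translation negligible_lowdim) auto
  then have "negligible (\<Union>d\<in>D. (+) x0 ` span {d})"
    using assms(1) by (intro negligible_Union) auto
  ultimately show ?thesis using negligible_subset by blast
qed

lemma Inter_thin_ray_cones_subset:
  fixes x0 :: "'a::real_normed_vector" and d :: "'i \<Rightarrow> 'a"
  assumes "finite I"
  shows "(\<Inter>n. ray_cone x0 (\<Union>i\<in>I. ball (d i) (1 / Suc n))) \<subseteq> ray_cone x0 (d ` I)"
proof
  fix y assume "y \<in> (\<Inter>n. ray_cone x0 (\<Union>i\<in>I. ball (d i) (1 / Suc n)))"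
  then have y: "y \<noteq> x0" "\<forall>n. \<exists>e\<in>d ` I. dist e (sgn (y - x0)) < 1 / Suc n"
    by (auto simp: ray_cone_def)
  have "\<exists>e\<in>d ` I. dist e (sgn (y - x0)) < \<gamma>" if "\<gamma> > 0" for \<gamma>
  proof -
    obtain n where "1 / Suc n < \<gamma>"
      using \<open>\<gamma> > 0\<close> by (metis reals_Archimedean inverse_eq_divide)
    then show ?thesis using y(2) by (meson less_trans)
  qed
  then have "sgn (y - x0) \<in> d ` I"
    using closed_approachable[OF finite_imp_closed] assms(1) by blast
  then show "y \<in> ray_cone x0 (d ` I)" using y(1) by (simp add: ray_cone_def)
qed

lemma ex_thin_ray_cone_measure_less:
  fixes x0 :: "'a::euclidean_space" and d :: "'i \<Rightarrow> 'a"
  assumes "finite I" "DIM('a) \<ge> 2" "\<epsilon> > 0"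
  shows "\<exists>\<delta>>0. measure lebesgue (ray_cone x0 (\<Union>i\<in>I. ball (d i) \<delta>) \<inter> cball x0 1) < \<epsilon>"
proof -
  define A where "A n = ray_cone x0 (\<Union>i\<in>I. ball (d i) (1 / Suc n)) \<inter> cball x0 1" for n
  have sets: "A n \<in> sets lebesgue" for n
  proof -
    have "open (ray_cone x0 (\<Union>i\<in>I. ball (d i) (1 / Suc n)))" by (intro open_ray_cone open_UN) auto
    then show ?thesis unfolding A_def by auto
  qed
  have "decseq A"
  proof (rule decseq_SucI)
    fix n
    have "1 / real (Suc (Suc n)) \<le> 1 / Suc n" by (simp add: frac_le)
    then show "A (Suc n) \<subseteq> A n" unfolding A_def ray_cone_def by fastforce
  qed
  moreover have "emeasure lebesgue (A n) \<noteq> \<infinity>" for n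
  proof -
    have "A n \<in> fmeasurable lebesgue"
      using sets[of n] by (intro fmeasurableI2[OF lmeasurable_cball[of x0 1]]) (auto simp: A_def)
    then show ?thesis using fmeasurableD2 by (metis infinity_ennreal_def)
  qed
  ultimately have "(\<lambda>n. measure lebesgue (A n)) \<longlonglongrightarrow> measure lebesgue (\<Inter>n. A n)"
    using sets by (intro Lim_measure_decseq) auto
  moreover have "(\<Inter>n. A n) \<subseteq> ray_cone x0 (d ` I)"
    using Inter_thin_ray_cones_subset[OF assms(1), of x0 d] unfolding A_def by blast
  then have "measure lebesgue (\<Inter>n. A n) = 0"
    using negligible_ray_cone_finite[of "d ` I"] assms negligible_subset negligible_imp_measure0 by blast
  ultimately have "\<forall>\<^sub>F n in sequentially. measure lebesgue (A n) < \<epsilon>"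
    using assms(3) by (simp add: order_tendstoD(2))
  then obtain n where "measure lebesgue (A n) < \<epsilon>"
    unfolding eventually_sequentially by blast
  then show ?thesis unfolding A_def by (intro exI[of _ "1 / Suc n"]) auto
qed

lemma radial_projection_to_sphere:
  fixes x0 y :: "'a::real_normed_vector"
  assumes "R > 0" "h \<ge> 0" "dist x0 y = R + h"
  shows "x0 + R *\<^sub>R sgn (y - x0) \<in> sphere x0 R" "dist (x0 + R *\<^sub>R sgn (y - x0)) y = h"
proof -
  define u where "u = sgn (y - x0)"
  have "R + h > 0" using assms(1,2) by simp
  then have "y \<noteq> x0" using assms(3) by auto
  then have u: "norm u = 1" "y = x0 + (R + h) *\<^sub>R u"
    using assms(3) \<open>R + h > 0\<close>
    by (simp_all add: u_def norm_sgn sgn_div_norm dist_norm norm_minus_commute)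
  have "x0 + R *\<^sub>R u - y = (- h) *\<^sub>R u" by (simp add: u(2) algebra_simps)
  then show "x0 + R *\<^sub>R sgn (y - x0) \<in> sphere x0 R" "dist (x0 + R *\<^sub>R sgn (y - x0)) y = h"
    using u(1) assms(1,2) by (simp_all add: dist_norm flip: u_def)
qed

lemma dist_sgn_sphere:
  fixes x0 e u :: "'a::real_normed_vector"
  assumes "R > 0" "dist x0 e = R"
  shows "dist (sgn (e - x0)) u = dist e (x0 + R *\<^sub>R u) / R"
proof -
  have "sgn (e - x0) - u = (e - (x0 + R *\<^sub>R u)) /\<^sub>R R"
    using assms by (simp add: sgn_div_norm dist_norm norm_minus_commute algebra_simps)
  then have "dist (sgn (e - x0)) u = norm ((e - (x0 + R *\<^sub>R u)) /\<^sub>R R)" by (simp only: dist_norm)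
  also have "\<dots> = dist e (x0 + R *\<^sub>R u) / R"
    using assms(1) by (simp add: dist_norm divide_inverse_commute)
  finally show ?thesis .
qed

lemma sensor_near_initial_sensor:
  assumes "continuous_on {0..} a" "continuous_on {0..} b" "\<eta> > 0"
  shows "\<exists>t>0. \<forall>s\<in>{0..t}. \<forall>y\<in>sensor a b s. \<exists>y0\<in>sensor a b 0. dist y y0 < \<eta>"
proof -
  obtain da where da: "da > 0" "\<And>s. 0 \<le> s \<Longrightarrow> s < da \<Longrightarrow> dist (a s) (a 0) < \<eta>"
    using assms(1,3) unfolding continuous_on_iff
    by (metis atLeast_iff dist_real_def diff_zero abs_of_nonneg order_refl)
  obtain db where db: "db > 0" "\<And>s. 0 \<le> s \<Longrightarrow> s < db \<Longrightarrow> dist (b s) (b 0) < \<eta>"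
    using assms(2,3) unfolding continuous_on_iff
    by (metis atLeast_iff dist_real_def diff_zero abs_of_nonneg order_refl)
  show ?thesis
  proof (intro exI[of _ "min da db / 2"] conjI ballI)
    show "min da db / 2 > 0" using da db by simp
  next
    fix s y assume "s \<in> {0..min da db / 2}" "y \<in> sensor a b s"
    moreover from this have "dist (a s) (a 0) < \<eta>" "dist (b s) (b 0) < \<eta>"
      using da db by auto
    ultimately show "\<exists>y0\<in>sensor a b 0. dist y y0 < \<eta>"
      using closed_segment_approx[of y "a s" "b s"] unfolding sensor_def by blast
  qed
qed

lemma sensor_near_sphere_in_ray_cone:
  fixes x0 :: point
  assumes "continuous_on {0..} a" "continuous_on {0..} b" "R0 > 0" "VT > 0" "\<delta> > 0"
  shows "\<exists>t>0. \<forall>s\<in>{0..t}. \<forall>y\<in>sensor a b s. dist x0 y = R0 + VT * s \<longrightarrow>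
           y \<in> ray_cone x0 (\<Union>e\<in>sphere x0 R0 \<inter> sensor a b 0. ball (sgn (e - x0)) \<delta>)"
proof -
  have "\<exists>\<eta>>0. \<forall>z\<in>sphere x0 R0. \<forall>y\<in>sensor a b 0. dist z y < \<eta> \<longrightarrow>
           (\<exists>e\<in>sphere x0 R0 \<inter> sensor a b 0. dist z e < R0 * \<delta>)"
    using assms(3,5) by (intro compact_closed_approx_Int) (auto simp: sensor_def)
  then obtain \<eta> where \<eta>: "\<eta> > 0" and near: "\<forall>z\<in>sphere x0 R0. \<forall>y\<in>sensor a b 0.
      dist z y < \<eta> \<longrightarrow> (\<exists>e\<in>sphere x0 R0 \<inter> sensor a b 0. dist z e < R0 * \<delta>)"
    by blast
  obtain t1 where "t1 > 0" and near0: "\<forall>s\<in>{0..t1}. \<forall>y\<in>sensor a b s. \<exists>y0\<in>sensor a b 0. dist y y0 < \<eta> / 2"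
    using sensor_near_initial_sensor[OF assms(1,2), of "\<eta> / 2"] \<eta> by auto
  define t where "t = min t1 (\<eta> / (2 * VT))"
  show ?thesis
  proof (intro exI[of _ t] conjI ballI impI)
    show "t > 0" using \<open>t1 > 0\<close> \<eta> assms(4) by (simp add: t_def)
  next
    fix s y assume s: "s \<in> {0..t}" and y: "y \<in> sensor a b s" "dist x0 y = R0 + VT * s"
    \<comment> \<open>The radial projection of \<open>y\<close> to the circle is \<open>VT s\<close>-close to \<open>y\<close>,
      hence \<open>\<eta>\<close>-close to the initial sensor.\<close>
    define u where "u = sgn (y - x0)"
    have "s \<in> {0..t1}" using s by (simp add: t_def)
    then obtain y0 where y0: "y0 \<in> sensor a b 0" "dist y y0 < \<eta> / 2" using near0 y(1) by blast
    have "0 \<le> VT * s" "VT * s \<le> \<eta> / 2" using s assms(4) by (simp_all add: t_def field_simps)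
    then have z: "x0 + R0 *\<^sub>R u \<in> sphere x0 R0" "dist (x0 + R0 *\<^sub>R u) y = VT * s"
      using radial_projection_to_sphere[OF assms(3) _ y(2)] by (simp_all add: u_def)
    then have "dist (x0 + R0 *\<^sub>R u) y0 < \<eta>"
      using y0(2) \<open>VT * s \<le> \<eta> / 2\<close> dist_triangle[of "x0 + R0 *\<^sub>R u" y0 y] by linarith
    then obtain e where e: "e \<in> sphere x0 R0 \<inter> sensor a b 0" "dist (x0 + R0 *\<^sub>R u) e < R0 * \<delta>"
      using near z(1) y0(1) by blast
    then have "u \<in> ball (sgn (e - x0)) \<delta>"
      using dist_sgn_sphere[OF assms(3), of x0 e u] assms(3)
      by (simp add: dist_commute divide_less_eq mult.commute)
    moreover have "y \<noteq> x0" using y(2) assms(3) \<open>0 \<le> VT * s\<close> by auto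
    ultimately show "y \<in> ray_cone x0 (\<Union>e\<in>sphere x0 R0 \<inter> sensor a b 0. ball (sgn (e - x0)) \<delta>)"
      using e(1) by (auto simp: ray_cone_def u_def)
  qed
qed

lemma abs_min_diff_le: "\<bar>min (x::real) c - min y c\<bar> \<le> \<bar>x - y\<bar>"
  by (simp add: min_def abs_if)

lemma dist_radial_path_le:
  fixes x0 u :: "'a::real_normed_vector"
  assumes "norm u \<le> 1" "VT \<ge> 0"
  shows "dist (x0 + min (R0 + VT * s1) \<rho> *\<^sub>R u) (x0 + min (R0 + VT * s2) \<rho> *\<^sub>R u) \<le> VT * \<bar>s1 - s2\<bar>"
proof -
  have "dist (x0 + min (R0 + VT * s1) \<rho> *\<^sub>R u) (x0 + min (R0 + VT * s2) \<rho> *\<^sub>R u)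
      = \<bar>min (R0 + VT * s1) \<rho> - min (R0 + VT * s2) \<rho>\<bar> * norm u"
    by (simp add: dist_norm flip: scaleR_diff_left)
  also have "\<dots> \<le> \<bar>min (R0 + VT * s1) \<rho> - min (R0 + VT * s2) \<rho>\<bar>"
    using assms(1) by (simp add: mult_left_le)
  also have "\<dots> \<le> \<bar>(R0 + VT * s1) - (R0 + VT * s2)\<bar>" by (rule abs_min_diff_le)
  also have "\<dots> = VT * \<bar>s1 - s2\<bar>" using assms(2) by (simp add: abs_mult flip: right_diff_distrib)
  finally show ?thesis .
qed

lemma radial_escape_in_evader_region:
  fixes x0 q :: point
  assumes "R0 \<ge> 0" "VT \<ge> 0"
    and hit: "\<forall>s\<in>{0..t}. \<forall>y\<in>sensor a b s. dist x0 y = R0 + VT * s \<longrightarrow> y \<in> ray_cone x0 U"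
    and q: "q \<in> cball x0 (R0 + VT * t)"
    and free: "\<forall>s\<in>{0..t}. q \<notin> sensor a b s" "q \<notin> ray_cone x0 U - cball x0 R0"
  shows "q \<in> evader_region x0 R0 VT a b t"
proof -
  define \<rho> u where "\<rho> = dist x0 q" and "u = sgn (q - x0)"
  \<comment> \<open>Start on the circle in the direction of \<open>q\<close>, run outward at full speed, stop at \<open>q\<close>.\<close>
  define p where "p s = x0 + min (R0 + VT * s) \<rho> *\<^sub>R u" for s
  have u: "q = x0 + \<rho> *\<^sub>R u" "norm u \<le> 1"
  proof -
    show "q = x0 + \<rho> *\<^sub>R u"
      by (cases "q = x0") (simp_all add: \<rho>_def u_def sgn_div_norm dist_norm norm_minus_commute)
    show "norm u \<le> 1" by (simp add: u_def norm_sgn)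
  qed
  have "0 \<le> min R0 \<rho>" using assms(1) by (simp add: \<rho>_def)
  then have "p 0 \<in> cball x0 R0"
    using u(2) mult_mono[of "min R0 \<rho>" R0 "norm u" 1] by (simp add: p_def dist_norm)
  moreover have "\<rho> \<le> R0 + VT * t" using q by (simp add: \<rho>_def)
  then have "p t = q" using u(1) by (simp add: p_def)
  moreover have "dist (p s1) (p s2) \<le> VT * \<bar>s1 - s2\<bar>" for s1 s2
    unfolding p_def using u(2) assms(2) by (rule dist_radial_path_le)
  moreover have "p s \<notin> sensor a b s" if s: "s \<in> {0..t}" for s
  proof (cases "\<rho> \<le> R0 + VT * s")
    case True
    then show ?thesis using free(1) s u(1) by (simp add: p_def)
  next
    case False
    moreover have "VT * s \<ge> 0" using s assms(2) by simp
    ultimately have "q \<noteq> x0" "R0 + VT * s \<ge> 0" "q \<notin> cball x0 R0"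
      using assms(1) by (auto simp: \<rho>_def)
    then have ps: "p s = x0 + ((R0 + VT * s) / \<rho>) *\<^sub>R (q - x0)" "dist x0 (p s) = R0 + VT * s"
      using False by (simp_all add: p_def u_def sgn_div_norm \<rho>_def dist_norm norm_minus_commute divide_inverse)
    show ?thesis
    proof
      assume "p s \<in> sensor a b s"
      then have "p s \<in> ray_cone x0 U" using hit s ps(2) by blast
      then have "R0 + VT * s \<noteq> 0" using ps(2) by (auto simp: ray_cone_def)
      then have "(R0 + VT * s) / \<rho> > 0"
        using \<open>R0 + VT * s \<ge> 0\<close> \<open>q \<noteq> x0\<close> by (simp add: \<rho>_def)
      then have "q \<in> ray_cone x0 U"
        using \<open>p s \<in> ray_cone x0 U\<close> ps(1) ray_cone_homothety_iff by metis
      then show False using free(2) \<open>q \<notin> cball x0 R0\<close> by blast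
    qed
  qed
  ultimately show ?thesis unfolding evader_region_def by (intro CollectI exI[of _ p]) auto
qed

lemma cball_subset_evader_region_Un_swept:
  fixes x0 :: point
  assumes "R0 \<ge> 0" "VT \<ge> 0"
    and hit: "\<forall>s\<in>{0..t}. \<forall>y\<in>sensor a b s. dist x0 y = R0 + VT * s \<longrightarrow> y \<in> ray_cone x0 U"
  shows "cball x0 (R0 + VT * t) \<subseteq> evader_region x0 R0 VT a b t \<union> (\<Union>s\<in>{0..t}. sensor a b s)
           \<union> (ray_cone x0 U \<inter> cball x0 (R0 + VT * t) - cball x0 R0)"
proof
  fix q assume q: "q \<in> cball x0 (R0 + VT * t)"
  consider "\<exists>s\<in>{0..t}. q \<in> sensor a b s" | "q \<in> ray_cone x0 U - cball x0 R0"
    | (free) "\<forall>s\<in>{0..t}. q \<notin> sensor a b s" "q \<notin> ray_cone x0 U - cball x0 R0"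
    by blast
  then show "q \<in> evader_region x0 R0 VT a b t \<union> (\<Union>s\<in>{0..t}. sensor a b s)
               \<union> (ray_cone x0 U \<inter> cball x0 (R0 + VT * t) - cball x0 R0)"
  proof cases
    case free
    then show ?thesis using radial_escape_in_evader_region[OF assms q] by blast
  qed (use q in auto)
qed

lemma outer_area_le_mono: "A \<subseteq> B \<Longrightarrow> outer_area_le B c \<Longrightarrow> outer_area_le A c"
  unfolding outer_area_le_def by blast

lemma outer_area_le_Un:
  assumes "outer_area_le A c" "outer_area_le B d" "0 \<le> c" "0 \<le> d"
  shows "outer_area_le (A \<union> B) (c + d)"
proof -
  obtain S T where S: "S \<in> sets lebesgue" "A \<subseteq> S" "emeasure lebesgue S \<le> ennreal c"
    and T: "T \<in> sets lebesgue" "B \<subseteq> T" "emeasure lebesgue T \<le> ennreal d"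
    using assms(1,2) unfolding outer_area_le_def by blast
  have "emeasure lebesgue (S \<union> T) \<le> emeasure lebesgue S + emeasure lebesgue T"
    using S(1) T(1) by (rule emeasure_subadditive)
  also have "\<dots> \<le> ennreal (c + d)" using S(3) T(3) assms(3,4) by (simp add: ennreal_plus add_mono)
  finally show ?thesis
    unfolding outer_area_le_def using S(1,2) T(1,2) by (intro bexI[of _ "S \<union> T"]) auto
qed

lemma outer_area_le_measure: "A \<in> lmeasurable \<Longrightarrow> outer_area_le A (measure lebesgue A)"
  unfolding outer_area_le_def by (intro bexI[of _ A]) (auto simp: emeasure_eq_measure2)

lemma measure_le_if_outer_area_le:
  assumes "A \<in> sets lebesgue" "outer_area_le A c" "0 \<le> c"
  shows "measure lebesgue A \<le> c"
proof -
  obtain S where S: "S \<in> sets lebesgue" "A \<subseteq> S" "emeasure lebesgue S \<le> ennreal c"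
    using assms(2) unfolding outer_area_le_def by blast
  have "emeasure lebesgue A \<le> emeasure lebesgue S" using S(2,1) by (rule emeasure_mono)
  then have "emeasure lebesgue A \<le> ennreal c" using S(3) by (rule order_trans)
  then have "enn2real (emeasure lebesgue A) \<le> enn2real (ennreal c)" by (intro enn2real_mono) auto
  then show ?thesis using assms(3) by (simp add: measure_def)
qed

lemma measure_cball_2:
  fixes x0 :: "real^2"
  assumes "R \<ge> 0"
  shows "measure lebesgue (cball x0 R) = pi * R\<^sup>2"
  using circle_area[OF assms, of x0] content_cball_conv_ball[of x0 R] by simp

lemma disk_area_le_sweep_bound:
  fixes x0 :: point
  assumes "R0 > 0" "VT \<ge> 0" "t \<ge> 0" "open U"
    and evader: "outer_area_le (evader_region x0 R0 VT a b t) (pi * R0\<^sup>2)"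
    and swept: "outer_area_le (\<Union>s\<in>{0..t}. sensor a b s) w" "0 \<le> w"
    and hit: "\<forall>s\<in>{0..t}. \<forall>y\<in>sensor a b s. dist x0 y = R0 + VT * s \<longrightarrow> y \<in> ray_cone x0 U"
  shows "pi * (R0 + VT * t)\<^sup>2
           \<le> pi * R0\<^sup>2 + w + ((R0 + VT * t)\<^sup>2 - R0\<^sup>2) * measure lebesgue (ray_cone x0 U \<inter> cball x0 1)"
proof -
  define R1 m where "R1 = R0 + VT * t" and "m = measure lebesgue (ray_cone x0 U \<inter> cball x0 1)"
  have "R0 \<le> R1" using assms(2,3) by (simp add: R1_def)
  have "ray_cone x0 U \<in> sets lebesgue" using open_ray_cone[OF assms(4)] by auto
  then have "ray_cone x0 U \<inter> cball x0 R1 - cball x0 R0 \<in> lmeasurable"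
    by (intro fmeasurableI2[OF lmeasurable_cball[of x0 R1]] sets.Diff sets.Int) auto
  moreover have "measure lebesgue (ray_cone x0 U \<inter> cball x0 R1 - cball x0 R0) = (R1\<^sup>2 - R0\<^sup>2) * m"
    using measure_ray_cone_annulus[of x0 U R0 R1] \<open>ray_cone x0 U \<in> sets lebesgue\<close> assms(1) \<open>R0 \<le> R1\<close>
    by (simp add: m_def)
  ultimately have cone: "outer_area_le (ray_cone x0 U \<inter> cball x0 R1 - cball x0 R0) ((R1\<^sup>2 - R0\<^sup>2) * m)"
    using outer_area_le_measure by metis
  have "0 \<le> (R1\<^sup>2 - R0\<^sup>2) * m"
    using assms(1) \<open>R0 \<le> R1\<close> by (simp add: m_def power_mono)
  then have "outer_area_le (evader_region x0 R0 VT a b t \<union> (\<Union>s\<in>{0..t}. sensor a b s)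
               \<union> (ray_cone x0 U \<inter> cball x0 R1 - cball x0 R0)) (pi * R0\<^sup>2 + w + (R1\<^sup>2 - R0\<^sup>2) * m)"
    using outer_area_le_Un[OF outer_area_le_Un[OF evader swept(1)] cone] swept(2) by simp
  then have "outer_area_le (cball x0 R1) (pi * R0\<^sup>2 + w + (R1\<^sup>2 - R0\<^sup>2) * m)"
    using cball_subset_evader_region_Un_swept[OF less_imp_le[OF assms(1)] assms(2) hit]
    unfolding R1_def by (rule outer_area_le_mono[rotated])
  then have "measure lebesgue (cball x0 R1) \<le> pi * R0\<^sup>2 + w + (R1\<^sup>2 - R0\<^sup>2) * m"
    using \<open>0 \<le> (R1\<^sup>2 - R0\<^sup>2) * m\<close> swept(2) by (intro measure_le_if_outer_area_le) simp_all
  then show ?thesis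
    using measure_cball_2[of R1 x0] assms(1) \<open>R0 \<le> R1\<close> by (simp add: R1_def m_def)
qed

lemma sweep_bound_lt_disk_area:
  fixes m :: real
  assumes "R0 > 0" "VT > 0" "t > 0" "0 \<le> r * Vs" "r * Vs < (pi - m) * R0 * VT"
  shows "pi * R0\<^sup>2 + 2 * r * Vs * t + ((R0 + VT * t)\<^sup>2 - R0\<^sup>2) * m < pi * (R0 + VT * t)\<^sup>2"
proof -
  have "0 < (pi - m) * (R0 * VT)" using assms(4,5) by (simp add: mult.assoc)
  moreover have "R0 * VT > 0" using assms(1,2) by simp
  ultimately have "pi - m > 0" by (simp add: zero_less_mult_iff)
  have "2 * r * Vs * t < 2 * ((pi - m) * R0 * VT) * t" using assms(3,5) by simp
  also have "\<dots> = (pi - m) * (2 * R0 * VT * t)" by (simp add: algebra_simps)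
  also have "\<dots> \<le> (pi - m) * (2 * R0 * VT * t + (VT * t)\<^sup>2)"
    using \<open>pi - m > 0\<close> by (intro mult_left_mono) auto
  finally show ?thesis by (simp add: power2_eq_square algebra_simps)
qed

theorem theorem1:
  fixes R0 r VT Vs :: real and x0 :: point and a b :: "real \<Rightarrow> point"
  assumes "R0 > 0" and "r > 0" and "VT > 0" and "Vs > 0"
    and "Vs < pi * R0 * VT / r"
    and "admissible_sweeper r Vs a b"
  shows "\<not> confines x0 R0 VT a b"
proof
  assume conf: "confines x0 R0 VT a b"
  have cont: "continuous_on {0..} a" "continuous_on {0..} b"
    and "dist (a 0) (b 0) = 2 * r"
    and sweep_rate: "\<forall>t1 t2. 0 \<le> t1 \<longrightarrow> t1 \<le> t2 \<longrightarrow>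
          outer_area_le (\<Union>s\<in>{t1..t2}. sensor a b s) (2 * r * Vs * (t2 - t1))"
    using assms(6) by (simp_all add: admissible_sweeper_def)
  define E0 where "E0 = sphere x0 R0 \<inter> sensor a b 0"
  define U where "U \<delta> = (\<Union>e\<in>E0. ball (sgn (e - x0)) \<delta>)" for \<delta>
  have "a 0 \<noteq> b 0" using \<open>dist (a 0) (b 0) = 2 * r\<close> assms(2) by auto
  then have "finite E0" unfolding E0_def sensor_def by (rule finite_sphere_Int_closed_segment)
  moreover have "pi - r * Vs / (R0 * VT) > 0" using assms(1-5) by (simp add: field_simps)
  ultimately have "\<exists>\<delta>>0. measure lebesgue (ray_cone x0 (U \<delta>) \<inter> cball x0 1) < pi - r * Vs / (R0 * VT)"
    unfolding U_def by (intro ex_thin_ray_cone_measure_less) auto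
  then obtain \<delta> where "\<delta> > 0"
    and thin: "measure lebesgue (ray_cone x0 (U \<delta>) \<inter> cball x0 1) < pi - r * Vs / (R0 * VT)"
    by blast
  obtain t where "t > 0"
    and hit: "\<forall>s\<in>{0..t}. \<forall>y\<in>sensor a b s. dist x0 y = R0 + VT * s \<longrightarrow> y \<in> ray_cone x0 (U \<delta>)"
    using sensor_near_sphere_in_ray_cone[OF cont assms(1,3) \<open>\<delta> > 0\<close>] unfolding U_def E0_def by blast
  have "open (U \<delta>)" unfolding U_def by (intro open_UN) auto
  then have "pi * (R0 + VT * t)\<^sup>2 \<le> pi * R0\<^sup>2 + 2 * r * Vs * t
               + ((R0 + VT * t)\<^sup>2 - R0\<^sup>2) * measure lebesgue (ray_cone x0 (U \<delta>) \<inter> cball x0 1)"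
    using conf sweep_rate[rule_format, of 0 t] assms(1-4) \<open>t > 0\<close> hit
    by (intro disk_area_le_sweep_bound) (auto simp: confines_def)
  moreover have "\<dots> < pi * (R0 + VT * t)\<^sup>2"
    using thin assms(1-4) \<open>t > 0\<close> by (intro sweep_bound_lt_disk_area) (simp_all add: field_simps)
  ultimately show False by simp
qed

end
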